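(* Let $f_1,f_2\in\mathcal{BC}^1_g([a,b],\mathbb F)$. Then $f_1f_2\in\mathcal{BC}^1_g([a,b],\mathbb F)$ if and only if \[(f_1)'_g(t)(f_2)'_g(t)=0\quad\text{for all }t\in((a^*,b)\cap A_g)\setminus H_g,\] where \[A_g=\{t\in\mathbb R: \sup\{s\in [a,b] : g(s)=g(t)\}\in D_g\},\] \[H_g=\{t\in\mathbb R: t\in(s_1,s_2]\text{ for some }s_1,s_2\in D_g\text{ with }(s_1,s_2)\subset C_g\}.\]
   Context: Let $g:\mathbb R\to\mathbb R$ be nondecreasing and left-continuous, $\mathbb F\in\{\mathbb R,\mathbb C\}$. $\Delta g(t)=g(t^+)-g(t)$, $D_g=\{t:\Delta g(t)>0\}$, $C_g=\{t: g\text{ constant on }(t-\varepsilon,t+\varepsilon)\text{ for some }\varepsilon>0\}=\bigcup_{n\in\Lambda}(a_n,b_n)$ (disjoint union of connected components), $N_g^-=\{a_n\}\setminus D_g$, $N_g^+=\{b_n\}\setminus D_g$. Fix $a<b$ with $a\notin N_g^-\cup D_g$ and $b\notin C_g\cup N_g^+\cup D_g$. For $t\in[a,b]$, $t^*=t$ if $t\notin C_g$ and $t^*=b_n$ if $t\in(a_n,b_n)$. The $g$-derivative of $u:[a,b]\to\mathbb F$ at $t$ is $u'_g(t)=\lim_{s\to t}\frac{u(s)-u(t)}{g(s)-g(t)}$ if $t\notin D_g\cup C_g$ and $u'_g(t)=\lim_{s\to t^{*+}}\frac{u(s)-u(t^* )}{g(s)-g(t^* )}$ if $t\in D_g\cup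 C_g$, provided the finite limit exists; limits are over $s\in[a,b]$ with nonzero denominator, and at points of $N_g^+\cup\{a\}$ only the right-hand limit, at points of $N_g^-\cup\{b\}$ only the left-hand limit is taken. A function $u:[a,b]\to\mathbb F$ is $g$-continuous at $t$ if for every $\varepsilon>0$ there is $\delta>0$ with $|u(t)-u(s)|<\varepsilon$ for all $s\in[a,b]$ with $|g(t)-g(s)|<\delta$. $\mathcal{BC}_g([a,b],\mathbb F)$ is the set of bounded functions $[a,b]\to\mathbb F$ that are $g$-continuous at every point of $[a,b]$, and $\mathcal{BC}^1_g([a,b],\mathbb F)$ is the set of $f\in\mathcal{BC}_g([a,b],\mathbb F)$ that are $g$-differentiable at every point of $[a,b]$ with $f'_g\in\mathcal{BC}_g([a,b],\mathbb F)$. *)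

theory Defs
  imports "HOL-Analysis.Analysis"
begin

definition gjump :: "(real \<Rightarrow> real) \<Rightarrow> real \<Rightarrow> real" where
  "gjump g t = Lim (at_right t) g - g t"

definition Dg :: "(real \<Rightarrow> real) \<Rightarrow> real set" where
  "Dg g = {t. gjump g t > 0}"

definition Cg :: "(real \<Rightarrow> real) \<Rightarrow> real set" where
  "Cg g = {t. \<exists>\<epsilon>>0. \<forall>s\<in>{t-\<epsilon><..<t+\<epsilon>}. g s = g t}"

definition Ng_minus :: "(real \<Rightarrow> real) \<Rightarrow> real set" where
  "Ng_minus g = {Inf C | C. C \<in> components (Cg g) \<and> bdd_below C} - Dg g"

definition Ng_plus :: "(real \<Rightarrow> real) \<Rightarrow> real set" where
  "Ng_plus g = {Sup C | C. C \<in> components (Cg g) \<and> bdd_above C} - Dg g"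

definition tstar :: "(real \<Rightarrow> real) \<Rightarrow> real \<Rightarrow> real" where
  "tstar g t = (if t \<in> Cg g then Sup (connected_component_set (Cg g) t) else t)"

definition has_gderiv ::
  "(real \<Rightarrow> real) \<Rightarrow> real \<Rightarrow> real \<Rightarrow> (real \<Rightarrow> 'a::real_normed_field) \<Rightarrow> real \<Rightarrow> 'a \<Rightarrow> bool" where
  "has_gderiv g a b u t L \<longleftrightarrow>
     (if t \<in> Dg g \<union> Cg g then
        ((\<lambda>s. (u s - u (tstar g t)) / of_real (g s - g (tstar g t))) \<longlongrightarrow> L)
          (at (tstar g t) within {s \<in> {a..b}. tstar g t < s \<and> g s \<noteq> g (tstar g t)})
      else
        ((\<lambda>s. (u s - u t) / of_real (g s - g t)) \<longlongrightarrow> L)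
          (at t within {s \<in> {a..b}. g s \<noteq> g t}))"

definition g_differentiable ::
  "(real \<Rightarrow> real) \<Rightarrow> real \<Rightarrow> real \<Rightarrow> (real \<Rightarrow> 'a::real_normed_field) \<Rightarrow> real \<Rightarrow> bool" where
  "g_differentiable g a b u t \<longleftrightarrow> (\<exists>L. has_gderiv g a b u t L)"

definition gderiv ::
  "(real \<Rightarrow> real) \<Rightarrow> real \<Rightarrow> real \<Rightarrow> (real \<Rightarrow> 'a::real_normed_field) \<Rightarrow> real \<Rightarrow> 'a" where
  "gderiv g a b u t = (SOME L. has_gderiv g a b u t L)"

definition g_continuous_at ::
  "(real \<Rightarrow> real) \<Rightarrow> real \<Rightarrow> real \<Rightarrow> (real \<Rightarrow> 'a::real_normed_vector) \<Rightarrow> real \<Rightarrow> bool" where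
  "g_continuous_at g a b u t \<longleftrightarrow>
     (\<forall>\<epsilon>>0. \<exists>\<delta>>0. \<forall>s\<in>{a..b}. \<bar>g t - g s\<bar> < \<delta> \<longrightarrow> norm (u t - u s) < \<epsilon>)"

definition BCg ::
  "(real \<Rightarrow> real) \<Rightarrow> real \<Rightarrow> real \<Rightarrow> (real \<Rightarrow> 'a::real_normed_vector) \<Rightarrow> bool" where
  "BCg g a b u \<longleftrightarrow> bounded (u ` {a..b}) \<and> (\<forall>t\<in>{a..b}. g_continuous_at g a b u t)"

definition BC1g ::
  "(real \<Rightarrow> real) \<Rightarrow> real \<Rightarrow> real \<Rightarrow> (real \<Rightarrow> 'a::real_normed_field) \<Rightarrow> bool" where
  "BC1g g a b u \<longleftrightarrow> BCg g a b u \<and> (\<forall>t\<in>{a..b}. g_differentiable g a b u t)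
                     \<and> BCg g a b (gderiv g a b u)"

definition Ag :: "(real \<Rightarrow> real) \<Rightarrow> real \<Rightarrow> real \<Rightarrow> real set" where
  "Ag g a b = {t. Sup {s \<in> {a..b}. g s = g t} \<in> Dg g}"

definition Hg :: "(real \<Rightarrow> real) \<Rightarrow> real set" where
  "Hg g = {t. \<exists>s1 s2. s1 \<in> Dg g \<and> s2 \<in> Dg g \<and> {s1<..<s2} \<subseteq> Cg g \<and> t \<in> {s1<..s2}}"

end

theory Submission
  imports Defs
begin

(*
  By the product rule for g-derivatives, (f1 f2)' = f1' f2 + f1 f2' + f1' f2' J, where
  J = tstar_jump is the jump of g at t*. The first two terms are bounded and g-continuous, so
  f1 f2 lies in BC^1_g exactly when P J is g-continuous, where P = f1' f2' is itself bounded and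
  g-continuous. J(t) is at most the gap g(s) - g(t) to any larger value of g. On the level set
  of t, J equals the jump of g at the last point sigma(t) = level_sup t of that level set, except
  that it may vanish when g(t) is a limit of smaller values of g. Hence P J is g-continuous iff
  P vanishes wherever sigma(t) is a jump point and g(t) is approached from below, and these
  points are exactly those of ((a*,b) cap A_g) - H_g.
*)

section \<open>Right limits and flat parts of a monotone function\<close>

lemma mono_tendsto_at_right_gjump:
  assumes "mono g"
  shows "(g \<longlongrightarrow> g t + gjump g t) (at_right t)"
proof -
  have "(g \<longlongrightarrow> Inf (g ` ({t<..} \<inter> UNIV))) (at t within ({t<..} \<inter> UNIV))"
    by (rule Lim_right_bound[where K = "g t"]) (auto intro: monoD[OF assms])
  then have "(g \<longlongrightarrow> Inf (g ` {t<..})) (at_right t)"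
    by simp
  moreover from this have "Lim (at_right t) g = Inf (g ` {t<..})"
    by (intro tendsto_Lim) simp_all
  ultimately show ?thesis
    by (simp add: gjump_def)
qed

lemma gjump_le:
  assumes "mono g" "x < y"
  shows "gjump g x \<le> g y - g x"
proof -
  have "\<forall>\<^sub>F s in at_right x. g s \<le> g y"
    using assms unfolding eventually_at_right_field by (auto intro!: exI[of _ y] monoD[OF assms(1)])
  with mono_tendsto_at_right_gjump[OF assms(1)] have "g x + gjump g x \<le> g y"
    by (rule tendsto_upperbound) simp
  then show ?thesis
    by simp
qed

lemma gjump_ge:
  assumes "mono g" "\<And>y. x < y \<Longrightarrow> c \<le> g y"
  shows "c - g x \<le> gjump g x"
proof -
  have "\<forall>\<^sub>F s in at_right x. c \<le> g s"
    using assms(2) by (auto simp: eventually_at_right_field intro: gt_ex)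
  with mono_tendsto_at_right_gjump[OF assms(1)] have "c \<le> g x + gjump g x"
    by (rule tendsto_lowerbound) simp
  then show ?thesis
    by simp
qed

lemma gjump_nonneg: "mono g \<Longrightarrow> 0 \<le> gjump g t"
  using gjump_ge[of g t "g t"] monoD[of g t] by fastforce

lemma mem_Dg_iff: "mono g \<Longrightarrow> t \<in> Dg g \<longleftrightarrow> gjump g t \<noteq> 0"
  using gjump_nonneg[of g t] by (auto simp: Dg_def)

lemma mem_Cg_iff: "t \<in> Cg g \<longleftrightarrow> (\<exists>e>0. \<forall>s. t - e < s \<and> s < t + e \<longrightarrow> g s = g t)"
  unfolding Cg_def Ball_def mem_Collect_eq greaterThanLessThan_iff by (rule refl)

lemma greaterThanLessThan_subset_Cg:
  assumes "\<And>s. x < s \<Longrightarrow> s < y \<Longrightarrow> g s = c"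
  shows "{x<..<y} \<subseteq> Cg g"
proof
  fix t assume t: "t \<in> {x<..<y}"
  have "g s = g t" if "t - min (t - x) (y - t) < s" "s < t + min (t - x) (y - t)" for s
    using that t assms[of s] assms[of t] by simp
  moreover have "min (t - x) (y - t) > 0"
    using t by simp
  ultimately show "t \<in> Cg g"
    unfolding mem_Cg_iff by blast
qed

lemma open_Cg: "open (Cg g)"
  unfolding open_subopen[of "Cg g"]
proof
  fix t assume "t \<in> Cg g"
  then obtain e where "e > 0" and e: "\<And>s. t - e < s \<Longrightarrow> s < t + e \<Longrightarrow> g s = g t"
    unfolding mem_Cg_iff by blast
  from e have "{t - e<..<t + e} \<subseteq> Cg g"
    by (rule greaterThanLessThan_subset_Cg)
  with \<open>e > 0\<close> show "\<exists>T. open T \<and> t \<in> T \<and> T \<subseteq> Cg g"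
    by (intro exI[of _ "{t - e<..<t + e}"]) auto
qed

lemma Cg_constant_on_connected:
  assumes "connected S" "S \<subseteq> Cg g" "x \<in> S" "y \<in> S"
  shows "g x = g y"
proof (rule connected_local_const[OF assms(1,3,4)], intro ballI)
  fix t assume "t \<in> S"
  with assms(2) have "t \<in> Cg g"
    by blast
  then obtain e where "e > 0" and e: "\<And>s. t - e < s \<Longrightarrow> s < t + e \<Longrightarrow> g s = g t"
    unfolding mem_Cg_iff by blast
  have "g t = g s" if "dist s t < e" for s
  proof -
    have "t - e < s" "s < t + e"
      using that by (auto simp: dist_real_def abs_less_iff)
    from e[OF this] show ?thesis
      by simp
  qed
  with \<open>e > 0\<close> have "\<forall>\<^sub>F s in nhds t. g t = g s"
    unfolding eventually_nhds_metric by blast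
  then show "\<forall>\<^sub>F s in at t within S. g t = g s"
    unfolding eventually_at_filter by (rule eventually_mono) simp
qed

lemma gjump_Cg: "t \<in> Cg g \<Longrightarrow> gjump g t = 0"
proof -
  assume "t \<in> Cg g"
  then obtain e where "e > 0" and e: "\<And>s. t - e < s \<Longrightarrow> s < t + e \<Longrightarrow> g s = g t"
    unfolding mem_Cg_iff by blast
  have "\<forall>s>t. s < t + e \<longrightarrow> g s = g t"
    using \<open>e > 0\<close> by (auto intro: e)
  with \<open>e > 0\<close> have "\<forall>\<^sub>F s in at_right t. g s = g t"
    unfolding eventually_at_right_field by (intro exI[of _ "t + e"]) simp
  then have "(g \<longlongrightarrow> g t) (at_right t)"
    by (rule tendsto_eventually)
  then show ?thesis
    unfolding gjump_def by (subst tendsto_Lim) simp_all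
qed

lemma Dg_disjoint_Cg: "t \<in> Dg g \<Longrightarrow> t \<notin> Cg g"
  using gjump_Cg by (force simp: Dg_def)

section \<open>Components of sets of reals\<close>

lemma components_real_same_side:
  fixes S :: "real set"
  assumes "C \<in> components S" "x \<notin> S" "c \<in> C" "d \<in> C"
  shows "x < c \<longleftrightarrow> x < d"
proof -
  have "is_interval C"
    using assms(1) in_components_connected is_interval_connected_1 by blast
  moreover have "x \<notin> C"
    using assms(1,2) in_components_subset by blast
  ultimately have "\<not> (c \<le> x \<and> x \<le> d)" "\<not> (d \<le> x \<and> x \<le> c)"
    using assms(3,4) unfolding is_interval_1 by blast+
  then show ?thesis
    by linarith
qed

lemma component_Inf_eq:
  fixes S :: "real set"
  assumes "x < y" "{x<..<y} \<subseteq> S" "x \<notin> S"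
  shows "\<exists>C\<in>components S. bdd_below C \<and> Inf C = x"
proof -
  define m where "m = (x + y) / 2"
  have m: "m \<in> {x<..<y}"
    using assms(1) by (simp add: m_def)
  define C where "C = connected_component_set S m"
  have C: "C \<in> components S"
    unfolding C_def using m assms(2) by (intro componentsI) blast
  have sub: "{x<..<y} \<subseteq> C"
    unfolding C_def using m assms(2) by (intro connected_component_maximal) auto
  have above: "x < c" if "c \<in> C" for c
    using components_real_same_side[OF C assms(3) that, of m] m sub by auto
  then have "bdd_below C"
    by (meson bdd_belowI less_imp_le)
  moreover have "Inf C \<le> x"
    using cInf_superset_mono[OF _ \<open>bdd_below C\<close> sub] assms(1) by simp
  moreover have "x \<le> Inf C"
    using in_components_nonempty[OF C] above by (meson cInf_greatest less_imp_le)
  ultimately show ?thesis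
    using C by (intro bexI[of _ C]) auto
qed

lemma component_Sup_eq:
  fixes S :: "real set"
  assumes "x < y" "{x<..<y} \<subseteq> S" "y \<notin> S"
  shows "\<exists>C\<in>components S. bdd_above C \<and> Sup C = y"
proof -
  define m where "m = (x + y) / 2"
  have m: "m \<in> {x<..<y}"
    using assms(1) by (simp add: m_def)
  define C where "C = connected_component_set S m"
  have C: "C \<in> components S"
    unfolding C_def using m assms(2) by (intro componentsI) blast
  have sub: "{x<..<y} \<subseteq> C"
    unfolding C_def using m assms(2) by (intro connected_component_maximal) auto
  have below: "c < y" if "c \<in> C" for c
  proof -
    have "\<not> y < c"
      using components_real_same_side[OF C assms(3) that, of m] m sub by auto
    moreover have "c \<noteq> y"
      using that in_components_subset[OF C] assms(3) by auto
    ultimately show ?thesis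
      by simp
  qed
  then have "bdd_above C"
    by (meson bdd_aboveI less_imp_le)
  moreover have "y \<le> Sup C"
    using cSup_subset_mono[OF _ \<open>bdd_above C\<close> sub] assms(1) by simp
  moreover have "Sup C \<le> y"
    using in_components_nonempty[OF C] below by (meson cSup_least less_imp_le)
  ultimately show ?thesis
    using C by (intro bexI[of _ C]) auto
qed

lemma Sup_component_notin_open:
  fixes S :: "real set"
  assumes "open S" "C \<in> components S" "bdd_above C"
  shows "Sup C \<notin> S"
proof
  assume "Sup C \<in> S"
  then obtain e where "e > 0" and ball: "ball (Sup C) e \<subseteq> S"
    using assms(1) openE by blast
  obtain c where c: "c \<in> C" "Sup C - e < c"
    using less_cSup_iff[OF in_components_nonempty[OF assms(2)] assms(3), of "Sup C - e"] \<open>e > 0\<close>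
    by auto
  have "c \<le> Sup C"
    using c(1) assms(3) by (rule cSup_upper)
  with c \<open>e > 0\<close> have "C \<inter> ball (Sup C) e \<noteq> {}"
    by (auto simp: dist_real_def)
  then have "ball (Sup C) e \<subseteq> C"
    using components_maximal[OF assms(2) connected_ball ball] by blast
  then have "Sup C + e / 2 \<in> C"
    using \<open>e > 0\<close> by (auto simp: dist_real_def)
  then have "Sup C + e / 2 \<le> Sup C"
    using assms(3) by (rule cSup_upper)
  with \<open>e > 0\<close> show False
    by simp
qed

section \<open>g-continuity\<close>

definition g_nhds :: "(real \<Rightarrow> real) \<Rightarrow> real \<Rightarrow> real \<Rightarrow> real \<Rightarrow> real filter" where
  "g_nhds g a b t = (INF d\<in>{0<..}. principal {s \<in> {a..b}. \<bar>g t - g s\<bar> < d})"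

lemma eventually_g_nhds:
  "eventually P (g_nhds g a b t) \<longleftrightarrow> (\<exists>d>0. \<forall>s\<in>{a..b}. \<bar>g t - g s\<bar> < d \<longrightarrow> P s)"
  unfolding g_nhds_def
  by (subst eventually_INF_base) (auto simp: eventually_principal intro!: bexI[of _ "min _ _"])

lemma g_continuous_at_iff_tendsto:
  "g_continuous_at g a b u t \<longleftrightarrow> (u \<longlongrightarrow> u t) (g_nhds g a b t)"
  unfolding tendsto_iff eventually_g_nhds g_continuous_at_def dist_norm
  by (simp add: norm_minus_commute)

lemma g_continuous_at_eq:
  assumes "g_continuous_at g a b u t" "s \<in> {a..b}" "g s = g t"
  shows "u s = u t"
proof -
  have "norm (u t - u s) < e" if "e > 0" for e
    using assms that unfolding g_continuous_at_def by fastforce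
  then show ?thesis
    by (metis dual_order.irrefl norm_not_less_zero right_minus_eq zero_less_norm_iff)
qed

lemma g_continuous_atI_one_sided:
  assumes level: "\<And>s. s \<in> {a..b} \<Longrightarrow> g s = g t \<Longrightarrow> u s = u t"
    and below: "\<And>e. e > 0 \<Longrightarrow> \<exists>d>0. \<forall>s\<in>{a..b}. g t - d < g s \<and> g s < g t \<longrightarrow> norm (u t - u s) < e"
    and above: "\<And>e. e > 0 \<Longrightarrow> \<exists>d>0. \<forall>s\<in>{a..b}. g t < g s \<and> g s < g t + d \<longrightarrow> norm (u t - u s) < e"
  shows "g_continuous_at g a b u t"
  unfolding g_continuous_at_def
proof (intro allI impI)
  fix e :: real assume "e > 0"
  obtain d1 where "d1 > 0" and d1: "\<forall>s\<in>{a..b}. g t - d1 < g s \<and> g s < g t \<longrightarrow> norm (u t - u s) < e"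
    using below[OF \<open>e > 0\<close>] by blast
  obtain d2 where "d2 > 0" and d2: "\<forall>s\<in>{a..b}. g t < g s \<and> g s < g t + d2 \<longrightarrow> norm (u t - u s) < e"
    using above[OF \<open>e > 0\<close>] by blast
  have "norm (u t - u s) < e" if "s \<in> {a..b}" "\<bar>g t - g s\<bar> < min d1 d2" for s
  proof (cases "g s = g t")
    case True
    then show ?thesis
      using level[OF that(1)] \<open>e > 0\<close> by simp
  next
    case False
    then have "g s < g t \<or> g t < g s"
      by linarith
    moreover have "g t - d1 < g s" "g s < g t + d2"
      using that(2) by (auto simp: abs_less_iff)
    ultimately show ?thesis
      using d1 d2 that(1) by blast
  qed
  with \<open>d1 > 0\<close> \<open>d2 > 0\<close> show "\<exists>d>0. \<forall>s\<in>{a..b}. \<bar>g t - g s\<bar> < d \<longrightarrow> norm (u t - u s) < e"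
    by (intro exI[of _ "min d1 d2"]) auto
qed

lemma bounded_mult_comp:
  fixes f h :: "'a \<Rightarrow> 'b::real_normed_algebra"
  assumes "bounded (f ` S)" "bounded (h ` S)"
  shows "bounded ((\<lambda>x. f x * h x) ` S)"
proof -
  obtain B C where B: "\<forall>x\<in>S. norm (f x) \<le> B" and C: "\<forall>x\<in>S. norm (h x) \<le> C"
    using assms unfolding bounded_iff by auto
  have "norm (f x * h x) \<le> B * C" if "x \<in> S" for x
    using B C that norm_mult_ineq[of "f x" "h x"]
    by (meson mult_mono norm_ge_zero order_trans)
  then show ?thesis
    unfolding bounded_iff by blast
qed

lemma BCg_add:
  fixes u v :: "real \<Rightarrow> 'a::real_normed_vector"
  shows "BCg g a b u \<Longrightarrow> BCg g a b v \<Longrightarrow> BCg g a b (\<lambda>s. u s + v s)"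
  unfolding BCg_def g_continuous_at_iff_tendsto by (auto intro: bounded_plus_comp tendsto_add)

lemma BCg_diff:
  fixes u v :: "real \<Rightarrow> 'a::real_normed_vector"
  shows "BCg g a b u \<Longrightarrow> BCg g a b v \<Longrightarrow> BCg g a b (\<lambda>s. u s - v s)"
  unfolding BCg_def g_continuous_at_iff_tendsto by (auto intro: bounded_minus_comp tendsto_diff)

lemma BCg_mult:
  fixes u v :: "real \<Rightarrow> 'a::real_normed_field"
  shows "BCg g a b u \<Longrightarrow> BCg g a b v \<Longrightarrow> BCg g a b (\<lambda>s. u s * v s)"
  unfolding BCg_def g_continuous_at_iff_tendsto by (auto intro: bounded_mult_comp tendsto_mult)

lemma BCg_cong:
  assumes "\<And>t. t \<in> {a..b} \<Longrightarrow> u t = v t"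
  shows "BCg g a b u \<longleftrightarrow> BCg g a b v"
proof -
  have "u ` {a..b} = v ` {a..b}"
    using assms by auto
  moreover have "g_continuous_at g a b u t \<longleftrightarrow> g_continuous_at g a b v t" if "t \<in> {a..b}" for t
    unfolding g_continuous_at_def using assms that by (metis (no_types, lifting))
  ultimately show ?thesis
    unfolding BCg_def by auto
qed

section \<open>The point t* and the product rule\<close>

lemma has_gderiv_gderiv: "g_differentiable g a b u t \<Longrightarrow> has_gderiv g a b u t (gderiv g a b u t)"
  unfolding g_differentiable_def gderiv_def by (rule someI_ex)

locale g_interval =
  fixes g :: "real \<Rightarrow> real" and a b :: real
  assumes mono: "mono g"
    and leftcont: "\<And>t. (g \<longlongrightarrow> g t) (at_left t)"
    and ab: "a < b"
    and a_ok: "a \<notin> Ng_minus g \<union> Dg g"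
    and b_ok: "b \<notin> Cg g \<union> Ng_plus g \<union> Dg g"
begin

lemma g_mono: "x \<le> y \<Longrightarrow> g x \<le> g y"
  using mono by (rule monoD)

lemma eq_if_constant_on_left:
  assumes "x < y" "\<And>s. x < s \<Longrightarrow> s < y \<Longrightarrow> g s = c"
  shows "g y = c"
proof -
  have "\<forall>\<^sub>F s in at_left y. g s = c"
    unfolding eventually_at_left_field using assms by blast
  then have "(g \<longlongrightarrow> c) (at_left y)"
    by (rule tendsto_eventually)
  with leftcont show ?thesis
    using tendsto_unique trivial_limit_at_left_real by blast
qed

lemma exists_left_close:
  assumes "e > 0" "x < t"
  obtains r where "x < r" "r < t" "g t - e < g r"
proof -
  have "\<forall>\<^sub>F s in at_left t. g t - e < g s"
    using assms(1) by (intro order_tendstoD(1)[OF leftcont]) simp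
  then obtain c where "c < t" and c: "\<And>s. c < s \<Longrightarrow> s < t \<Longrightarrow> g t - e < g s"
    unfolding eventually_at_left_field by blast
  show ?thesis
    using that[of "(max c x + t) / 2"] c[of "(max c x + t) / 2"] \<open>c < t\<close> assms(2) by simp
qed

lemma not_constant_right_of_a:
  assumes "a < y" "\<And>s. a < s \<Longrightarrow> s < y \<Longrightarrow> g s = c" "a \<notin> Cg g"
  shows False
proof -
  have "{a<..<y} \<subseteq> Cg g"
    using assms(2) by (rule greaterThanLessThan_subset_Cg)
  from component_Inf_eq[OF assms(1) this assms(3)] have "a \<in> Ng_minus g \<union> Dg g"
    unfolding Ng_minus_def by blast
  with a_ok show False
    by blast
qed

lemma not_constant_left_of_b:
  assumes "x < b" "\<And>s. x < s \<Longrightarrow> s < b \<Longrightarrow> g s = c"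
  shows False
proof -
  have "{x<..<b} \<subseteq> Cg g"
    using assms(2) by (rule greaterThanLessThan_subset_Cg)
  from component_Sup_eq[OF assms(1) this] b_ok have "b \<in> Ng_plus g \<union> Dg g"
    unfolding Ng_plus_def by blast
  with b_ok show False
    by blast
qed

lemma tstar_not_Cg: "t \<notin> Cg g \<Longrightarrow> tstar g t = t"
  by (simp add: tstar_def)

lemma Cg_component_Sup:
  assumes "t \<in> Cg g" "t \<le> b"
  defines "C \<equiv> connected_component_set (Cg g) t"
  shows "t < Sup C" "Sup C < b" "Sup C \<notin> Cg g" "\<And>x. t \<le> x \<Longrightarrow> x < Sup C \<Longrightarrow> g x = g t"
proof -
  have C: "C \<in> components (Cg g)" "t \<in> C" "C \<subseteq> Cg g"
    unfolding C_def using assms(1) connected_component_subset by (auto intro: componentsI)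
  have "t \<noteq> b"
    using assms(1) b_ok by blast
  have less_b: "c < b" if "c \<in> C" for c
    using components_real_same_side[OF C(1) _ that C(2), of b] b_ok assms(2) C(3) that \<open>t \<noteq> b\<close>
    by force
  then have bdd: "bdd_above C"
    by (meson bdd_aboveI less_imp_le)
  show Sup_notin: "Sup C \<notin> Cg g"
    using open_Cg C(1) bdd by (rule Sup_component_notin_open)
  have "t \<le> Sup C"
    using C(2) bdd by (rule cSup_upper)
  with Sup_notin assms(1) show "t < Sup C"
    by (cases "t = Sup C") auto
  have "Sup C \<le> b"
    using C(2) less_b by (intro cSup_least) (auto intro: less_imp_le)
  moreover have "Sup C \<noteq> b"
    using C(1) bdd b_ok unfolding Ng_plus_def by blast
  ultimately show "Sup C < b"
    by simp
  fix x assume le: "t \<le> x" and less: "x < Sup C"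
  obtain c where "c \<in> C" "x < c"
    using less_cSup_iff[OF _ bdd] C(2) less by blast
  moreover have "is_interval C"
    using in_components_connected[OF C(1)] is_interval_connected_1 by blast
  ultimately have "x \<in> C"
    using C(2) le unfolding is_interval_1 by (blast intro: less_imp_le)
  from Cg_constant_on_connected[OF in_components_connected[OF C(1)] C(3) this C(2)]
  show "g x = g t" .
qed

lemma tstar_Cg:
  assumes "t \<in> Cg g" "t \<in> {a..b}"
  shows "t < tstar g t" "tstar g t < b" "g (tstar g t) = g t" "\<And>x. tstar g t < x \<Longrightarrow> g t < g x"
proof -
  have tstar: "tstar g t = Sup (connected_component_set (Cg g) t)"
    using assms(1) by (simp add: tstar_def)
  have "t \<le> b"
    using assms(2) by simp
  note Sup = Cg_component_Sup[OF assms(1) this, folded tstar]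
  show "t < tstar g t" "tstar g t < b"
    using Sup(1,2) by auto
  show "g (tstar g t) = g t"
    using Sup(1) by (rule eq_if_constant_on_left) (meson Sup(4) less_imp_le)
  fix x assume "tstar g t < x"
  show "g t < g x"
  proof (rule ccontr)
    assume "\<not> g t < g x"
    then have "g s = g t" if "t < s" "s < x" for s
      using g_mono[of t s] g_mono[of s x] that by simp
    then have "{t<..<x} \<subseteq> Cg g"
      by (rule greaterThanLessThan_subset_Cg)
    then show False
      using Sup(1,3) \<open>tstar g t < x\<close> by auto
  qed
qed

lemma tstar_bounds:
  assumes "t \<in> {a..b}"
  shows "t \<le> tstar g t" "tstar g t \<le> b" "g (tstar g t) = g t"
  using tstar_Cg[OF _ assms] tstar_not_Cg[of t] assms by (cases "t \<in> Cg g"; force)+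

lemma tstar_a_less_iff:
  assumes "t \<in> {a..b}"
  shows "tstar g a < t \<longleftrightarrow> g a < g t"
proof (cases "a \<in> Cg g")
  case True
  have a: "a \<in> {a..b}"
    using ab by simp
  show ?thesis
  proof
    assume "tstar g a < t"
    then show "g a < g t"
      by (rule tstar_Cg(4)[OF True a])
  next
    assume "g a < g t"
    then show "tstar g a < t"
      using g_mono[of t "tstar g a"] tstar_Cg(3)[OF True a] by linarith
  qed
next
  case False
  then have tstar: "tstar g a = a"
    by (rule tstar_not_Cg)
  show ?thesis
  proof
    assume "tstar g a < t"
    then have "a < t"
      using tstar by simp
    have "g a \<noteq> g t"
    proof
      assume "g a = g t"
      then have "g s = g a" if "a < s" "s < t" for s
        using g_mono[of a s] g_mono[of s t] that by simp
      with \<open>a < t\<close> False show False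
        using not_constant_right_of_a by blast
    qed
    then show "g a < g t"
      using g_mono[of a t] \<open>a < t\<close> by simp
  next
    assume "g a < g t"
    then show "tstar g a < t"
      using tstar assms by (cases "t = a") auto
  qed
qed

definition level_sup :: "real \<Rightarrow> real" where
  "level_sup t = Sup {s \<in> {a..b}. g s = g t}"

lemma level_sup_cong: "g s = g t \<Longrightarrow> level_sup s = level_sup t"
  by (simp add: level_sup_def)

lemma Ag_iff: "t \<in> Ag g a b \<longleftrightarrow> level_sup t \<in> Dg g"
  by (simp add: Ag_def level_sup_def)

lemma
  assumes "t \<in> {a..b}"
  shows le_level_sup: "\<And>s. s \<in> {a..b} \<Longrightarrow> g s = g t \<Longrightarrow> s \<le> level_sup t"
    and level_sup_le: "level_sup t \<le> b"
    and g_level_sup: "g (level_sup t) = g t"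
proof -
  define L where "L = {s \<in> {a..b}. g s = g t}"
  have L: "t \<in> L" "bdd_above L"
    using assms by (auto simp: L_def intro: bdd_aboveI[of _ b])
  show le: "\<And>s. s \<in> {a..b} \<Longrightarrow> g s = g t \<Longrightarrow> s \<le> level_sup t"
    unfolding level_sup_def L_def[symmetric] using L(2) by (auto intro: cSup_upper simp: L_def)
  show "level_sup t \<le> b"
    unfolding level_sup_def L_def[symmetric] using L(1) by (auto intro: cSup_least simp: L_def)
  have const: "g x = g t" if le: "t \<le> x" and less: "x < level_sup t" for x
  proof -
    obtain y where "y \<in> L" "x < y"
      using less_cSup_iff[of L x] L less unfolding level_sup_def L_def[symmetric] by blast
    then show ?thesis
      using g_mono[of t x] g_mono[of x y] le by (simp add: L_def)
  qed
  have "t \<le> level_sup t"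
    using le assms by simp
  show "g (level_sup t) = g t"
  proof (cases "t = level_sup t")
    case False
    with \<open>t \<le> level_sup t\<close> have "t < level_sup t"
      by simp
    then show ?thesis
      by (rule eq_if_constant_on_left) (meson const less_imp_le)
  qed simp
qed

lemma level_sup_bounds: "t \<in> {a..b} \<Longrightarrow> level_sup t \<in> {a..b}" "t \<in> {a..b} \<Longrightarrow> t \<le> level_sup t"
  using le_level_sup[of t t] level_sup_le[of t] by auto

lemma level_sup_less_iff:
  assumes "t \<in> {a..b}" "s \<in> {a..b}"
  shows "level_sup t < s \<longleftrightarrow> g t < g s"
  using le_level_sup[OF assms] g_mono[of s "level_sup t"] g_mono[of "level_sup t" s]
    g_level_sup[OF assms(1)] by force

definition gderiv_filter :: "real \<Rightarrow> real filter" where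
  "gderiv_filter t = (if t \<in> Dg g \<union> Cg g
     then at (tstar g t) within {s \<in> {a..b}. tstar g t < s \<and> g s \<noteq> g (tstar g t)}
     else at t within {s \<in> {a..b}. g s \<noteq> g t})"

lemma has_gderiv_iff_tendsto:
  "has_gderiv g a b u t L \<longleftrightarrow>
     ((\<lambda>s. (u s - u (tstar g t)) / of_real (g s - g (tstar g t))) \<longlongrightarrow> L) (gderiv_filter t)"
  by (cases "t \<in> Dg g \<union> Cg g") (auto simp: has_gderiv_def gderiv_filter_def tstar_not_Cg)

lemma tstar_Dg_Cg:
  assumes "t \<in> {a..b}" "t \<in> Dg g \<union> Cg g"
  shows "tstar g t < b" "\<And>x. tstar g t < x \<Longrightarrow> g (tstar g t) < g x"
proof -
  have "tstar g t < b \<and> (\<forall>x. tstar g t < x \<longrightarrow> g (tstar g t) < g x)"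
  proof (cases "t \<in> Cg g")
    case True
    then show ?thesis
      using tstar_Cg[OF True assms(1)] by simp
  next
    case False
    with assms(2) have "t \<in> Dg g"
      by blast
    then have "gjump g t > 0"
      by (simp add: Dg_def)
    then have "g t < g x" if "t < x" for x
      using gjump_le[OF mono that] by simp
    moreover have "t \<noteq> b"
      using b_ok \<open>t \<in> Dg g\<close> by blast
    ultimately show ?thesis
      using assms(1) tstar_not_Cg[OF False] by simp
  qed
  then show "tstar g t < b" "\<And>x. tstar g t < x \<Longrightarrow> g (tstar g t) < g x"
    by blast+
qed

lemma islimpt_level_complement:
  assumes t: "t \<in> {a..b}" and "t \<notin> Cg g"
  shows "t islimpt {s \<in> {a..b}. g s \<noteq> g t}"
  unfolding islimpt_approachable_real
proof (intro allI impI, rule ccontr)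
  fix e :: real assume "e > 0" and "\<not> (\<exists>s\<in>{s \<in> {a..b}. g s \<noteq> g t}. s \<noteq> t \<and> \<bar>s - t\<bar> < e)"
  then have flat: "g s = g t" if "s \<in> {a..b}" "\<bar>s - t\<bar> < e" for s
    using that by (cases "s = t") auto
  consider "t = a" | "t = b" | "a < t" "t < b"
    using t by force
  then show False
  proof cases
    case 1
    have "g s = g t" if "a < s" "s < min b (a + e)" for s
      using flat[of s] that 1 by simp
    then show False
      using not_constant_right_of_a[of "min b (a + e)"] ab \<open>e > 0\<close> \<open>t \<notin> Cg g\<close> 1 by auto
  next
    case 2
    have "g s = g t" if "max a (b - e) < s" "s < b" for s
      using flat[of s] that 2 by simp
    then show False
      using not_constant_left_of_b[of "max a (b - e)"] ab \<open>e > 0\<close> by auto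
  next
    case 3
    define d where "d = min e (min (t - a) (b - t))"
    have "d > 0"
      using 3 \<open>e > 0\<close> by (simp add: d_def)
    moreover have "\<forall>s. t - d < s \<and> s < t + d \<longrightarrow> g s = g t"
    proof (intro allI impI)
      fix s assume "t - d < s \<and> s < t + d"
      with 3 show "g s = g t"
        by (intro flat) (auto simp: d_def abs_less_iff)
    qed
    ultimately have "t \<in> Cg g"
      unfolding mem_Cg_iff by blast
    with \<open>t \<notin> Cg g\<close> show False
      by blast
  qed
qed

lemma gderiv_filter_nonbot:
  assumes "t \<in> {a..b}"
  shows "gderiv_filter t \<noteq> bot"
proof (cases "t \<in> Dg g \<union> Cg g")
  case True
  define p where "p = tstar g t"
  have "a \<le> p"
    using tstar_bounds(1)[OF assms] assms unfolding p_def by simp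
  have "p < b" "\<And>x. p < x \<Longrightarrow> g p < g x"
    using tstar_Dg_Cg[OF assms True] unfolding p_def by auto
  then have "{p<..<b} \<subseteq> {s \<in> {a..b}. p < s \<and> g s \<noteq> g p}"
    using \<open>a \<le> p\<close> by force
  moreover have "p islimpt {p<..<b}"
    using \<open>p < b\<close> by (simp add: islimpt_greaterThanLessThan1)
  ultimately have "p islimpt {s \<in> {a..b}. p < s \<and> g s \<noteq> g p}"
    by (rule islimpt_subset[rotated])
  then show ?thesis
    using True by (simp add: gderiv_filter_def p_def trivial_limit_within)
next
  case False
  then show ?thesis
    using islimpt_level_complement[OF assms]
    by (simp add: gderiv_filter_def trivial_limit_within)
qed

lemma eventually_gderiv_filter:
  "\<forall>\<^sub>F s in gderiv_filter t. s \<in> {a..b} \<and> g s \<noteq> g (tstar g t)"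
  by (cases "t \<in> Dg g \<union> Cg g")
    (auto simp: gderiv_filter_def eventually_at_filter tstar_not_Cg)

lemma tendsto_g_gderiv_filter:
  assumes "t \<in> {a..b}"
  shows "(g \<longlongrightarrow> g (tstar g t) + gjump g (tstar g t)) (gderiv_filter t)"
proof (cases "t \<in> Dg g \<union> Cg g")
  case True
  have "(g \<longlongrightarrow> g (tstar g t) + gjump g (tstar g t)) (at_right (tstar g t))"
    by (rule mono_tendsto_at_right_gjump[OF mono])
  then show ?thesis
    using True unfolding gderiv_filter_def by (auto elim: tendsto_within_subset)
next
  case False
  then have "gjump g t = 0"
    using mem_Dg_iff[OF mono] by blast
  then have "(g \<longlongrightarrow> g t) (at_right t)"
    using mono_tendsto_at_right_gjump[OF mono, of t] by simp
  with leftcont have "(g \<longlongrightarrow> g t) (at t)"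
    by (simp add: filterlim_at_split)
  then show ?thesis
    using False \<open>gjump g t = 0\<close> unfolding gderiv_filter_def
    by (auto simp: tstar_not_Cg intro: tendsto_within_subset)
qed

lemma gderiv_eqI:
  assumes "t \<in> {a..b}" "has_gderiv g a b u t L"
  shows "gderiv g a b u t = L"
proof -
  have "has_gderiv g a b u t (gderiv g a b u t)"
    using assms(2) by (intro has_gderiv_gderiv) (auto simp: g_differentiable_def)
  with assms(2) show ?thesis
    using gderiv_filter_nonbot[OF assms(1)] unfolding has_gderiv_iff_tendsto
    by (blast intro: tendsto_unique)
qed

lemma has_gderiv_mult:
  fixes u v :: "real \<Rightarrow> 'a::real_normed_field"
  assumes t: "t \<in> {a..b}" and du: "has_gderiv g a b u t Lu" and dv: "has_gderiv g a b v t Lv"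
  shows "has_gderiv g a b (\<lambda>s. u s * v s) t
     (Lu * v (tstar g t) + u (tstar g t) * Lv + Lu * Lv * of_real (gjump g (tstar g t)))"
proof -
  define p where "p = tstar g t"
  define j where "j = gjump g p"
  define D where "D = (\<lambda>s. (of_real (g s - g p) :: 'a))"
  define Qu where "Qu = (\<lambda>s. (u s - u p) / D s)"
  define Qv where "Qv = (\<lambda>s. (v s - v p) / D s)"
  have Qu: "(Qu \<longlongrightarrow> Lu) (gderiv_filter t)" and Qv: "(Qv \<longlongrightarrow> Lv) (gderiv_filter t)"
    using du dv unfolding has_gderiv_iff_tendsto Qu_def Qv_def D_def p_def .
  have D_nonzero: "\<forall>\<^sub>F s in gderiv_filter t. D s \<noteq> 0"
    using eventually_gderiv_filter[of t] by eventually_elim (simp add: D_def p_def)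
  have "((\<lambda>s. g s - g p) \<longlongrightarrow> (g p + j) - g p) (gderiv_filter t)"
    using tendsto_g_gderiv_filter[OF t] unfolding p_def j_def by (intro tendsto_intros)
  then have D: "(D \<longlongrightarrow> of_real j) (gderiv_filter t)"
    unfolding D_def by (intro tendsto_intros) simp
  have "((\<lambda>s. v p + Qv s * D s) \<longlongrightarrow> v p + Lv * of_real j) (gderiv_filter t)"
    using Qv D by (intro tendsto_intros)
  moreover have "\<forall>\<^sub>F s in gderiv_filter t. v p + Qv s * D s = v s"
    using D_nonzero by eventually_elim (simp add: Qv_def)
  \<comment> \<open>v does not tend to v(t*) along the filter: this is where the jump term comes from\<close>
  ultimately have v: "(v \<longlongrightarrow> v p + Lv * of_real j) (gderiv_filter t)"
    by (rule Lim_transform_eventually)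
  have "((\<lambda>s. Qu s * v s + u p * Qv s) \<longlongrightarrow> Lu * (v p + Lv * of_real j) + u p * Lv) (gderiv_filter t)"
    using Qu v Qv by (intro tendsto_intros)
  moreover have "\<forall>\<^sub>F s in gderiv_filter t. Qu s * v s + u p * Qv s = (u s * v s - u p * v p) / D s"
    using D_nonzero by eventually_elim (simp add: Qu_def Qv_def field_simps)
  ultimately have "((\<lambda>s. (u s * v s - u p * v p) / D s) \<longlongrightarrow> Lu * (v p + Lv * of_real j) + u p * Lv)
      (gderiv_filter t)"
    by (rule Lim_transform_eventually)
  then show ?thesis
    unfolding has_gderiv_iff_tendsto D_def p_def[symmetric] j_def[symmetric]
    by (simp add: algebra_simps)
qed


section \<open>The critical points\<close>

definition tstar_jump :: "real \<Rightarrow> real" where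
  "tstar_jump t = gjump g (tstar g t)"

definition approached_from_below :: "real \<Rightarrow> bool" where
  "approached_from_below t \<longleftrightarrow> (\<forall>d>0. \<exists>s\<in>{a..b}. g t - d < g s \<and> g s < g t)"

lemma approached_from_below_cong: "g s = g t \<Longrightarrow> approached_from_below s = approached_from_below t"
  by (simp add: approached_from_below_def)

lemma tstar_jump_nonneg: "0 \<le> tstar_jump t"
  unfolding tstar_jump_def by (rule gjump_nonneg[OF mono])

lemma tstar_jump_le:
  assumes "s \<in> {a..b}" "g s < g y"
  shows "tstar_jump s \<le> g y - g s"
proof -
  have "tstar g s < y"
    using g_mono[of y "tstar g s"] tstar_bounds(3)[OF assms(1)] assms(2) by force
  from gjump_le[OF mono this] show ?thesis
    using tstar_bounds(3)[OF assms(1)] unfolding tstar_jump_def by simp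
qed

lemma tstar_jump_le_range:
  assumes "t \<in> {a..b}"
  shows "tstar_jump t \<le> g b - g a"
proof (cases "tstar g t < b")
  case True
  then show ?thesis
    using gjump_le[OF mono True] tstar_bounds(3)[OF assms] g_mono[of a t] assms
    unfolding tstar_jump_def by simp
next
  case False
  then have "tstar g t = b"
    using tstar_bounds(2)[OF assms] by simp
  moreover have "gjump g b = 0"
    using b_ok mem_Dg_iff[OF mono] by blast
  ultimately show ?thesis
    using g_mono[of a b] ab unfolding tstar_jump_def by simp
qed

lemma approached_from_below_if_least_in_level:
  assumes "c \<in> {a..b}" "a < c" "g c = g t" and least: "\<And>s. s \<in> {a..b} \<Longrightarrow> s < c \<Longrightarrow> g s \<noteq> g t"
  shows "approached_from_below t"
  unfolding approached_from_below_def
proof (intro allI impI)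
  fix d :: real assume "d > 0"
  obtain r where r: "a < r" "r < c" "g c - d < g r"
    using exists_left_close[OF \<open>d > 0\<close> assms(2)] by blast
  have "r \<in> {a..b}"
    using r assms(1) by simp
  moreover have "g r < g t"
    using g_mono[of r c] r(2) assms(3) least[OF \<open>r \<in> {a..b}\<close> r(2)] by simp
  ultimately show "\<exists>s\<in>{a..b}. g t - d < g s \<and> g s < g t"
    using r(3) assms(3) by auto
qed

lemma approached_from_below_if_flat_right:
  assumes s: "s \<in> {a..b}" "s \<notin> Cg g" and flat: "s < x" "g x = g s"
  shows "approached_from_below s"
proof (rule approached_from_below_if_least_in_level[OF s(1) _ refl])
  have const: "g y = g s" if "r \<le> s" "g r = g s" "r < y" "y < x" for r y
    using g_mono[of r y] g_mono[of y x] flat that by simp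
  show "a < s"
  proof (rule ccontr)
    assume "\<not> a < s"
    with s have "s = a"
      by simp
    have "g y = g s" if "a < y" "y < x" for y
      using const[of a y] \<open>s = a\<close> that by simp
    with \<open>s = a\<close> flat(1) s(2) show False
      using not_constant_right_of_a[of x "g s"] by blast
  qed
  show "g r \<noteq> g s" if r: "r \<in> {a..b}" "r < s" for r
  proof
    assume "g r = g s"
    then have "g y = g s" if "r < y" "y < x" for y
      using const[of r y] r(2) that by simp
    then have "{r<..<x} \<subseteq> Cg g"
      by (rule greaterThanLessThan_subset_Cg)
    with s(2) r(2) flat(1) show False
      by auto
  qed
qed

lemma tstar_jump_cases:
  assumes "s \<in> {a..b}"
  shows "tstar_jump s = gjump g (level_sup s) \<or> (tstar_jump s = 0 \<and> approached_from_below s)"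
proof -
  define p where "p = tstar g s"
  have "p \<in> {a..b}" "g p = g s"
    using tstar_bounds[OF assms] assms unfolding p_def by auto
  then have "p \<le> level_sup s"
    by (rule le_level_sup[OF assms])
  show ?thesis
  proof (cases "p = level_sup s")
    case True
    then show ?thesis
      by (simp add: tstar_jump_def p_def)
  next
    case False
    with \<open>p \<le> level_sup s\<close> have less: "p < level_sup s"
      by simp
    have "s \<notin> Cg g"
      using tstar_Cg(4)[OF _ assms] less g_level_sup[OF assms] unfolding p_def by force
    then have "p = s"
      by (simp add: p_def tstar_not_Cg)
    have "gjump g s \<le> 0"
      using gjump_le[OF mono, of s "level_sup s"] less g_level_sup[OF assms] \<open>p = s\<close> by simp
    then have "tstar_jump s = 0"
      using gjump_nonneg[OF mono, of s] \<open>p = s\<close> by (simp add: tstar_jump_def p_def)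
    moreover have "approached_from_below s"
      using approached_from_below_if_flat_right[OF assms \<open>s \<notin> Cg g\<close>] less \<open>p = s\<close>
        g_level_sup[OF assms] by blast
    ultimately show ?thesis
      by blast
  qed
qed

lemma tstar_jump_eq_zero:
  assumes "t \<in> {a..b}" "level_sup t \<notin> Dg g"
  shows "tstar_jump t = 0"
proof -
  have "gjump g (level_sup t) = 0"
    using assms(2) mem_Dg_iff[OF mono] by blast
  then show ?thesis
    using tstar_jump_cases[OF assms(1)] by auto
qed

lemma Hg_not_approached_from_below:
  assumes "t \<in> Hg g"
  shows "\<not> approached_from_below t"
proof
  assume approached: "approached_from_below t"
  obtain s1 s2 where s: "s1 \<in> Dg g" "s2 \<in> Dg g" "{s1<..<s2} \<subseteq> Cg g" "s1 < t" "t \<le> s2"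
    using assms unfolding Hg_def by auto
  have const: "g x = g y" if "x \<in> {s1<..<s2}" "y \<in> {s1<..<s2}" for x y
    using Cg_constant_on_connected[OF _ s(3) that] by simp
  have s2: "g s2 = g x" if x: "x \<in> {s1<..<s2}" for x
  proof (rule eq_if_constant_on_left)
    show "s1 < s2"
      using s(4,5) by simp
    show "g y = g x" if "s1 < y" "y < s2" for y
      using const[of y x] that x by simp
  qed
  have gt: "g x = g t" if "s1 < x" "x < t" for x
  proof (cases "t = s2")
    case True
    with s2[of x] that show ?thesis
      by simp
  next
    case False
    with const[of x t] that s(4,5) show ?thesis
      by simp
  qed
  have "gjump g s1 > 0"
    using s(1) by (simp add: Dg_def)
  then obtain x where x: "x \<in> {a..b}" "g t - gjump g s1 < g x" "g x < g t"
    using approached unfolding approached_from_below_def by blast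
  have "x < t"
    using x(3) g_mono[of t x] by force
  then have "x \<le> s1"
    using gt[of x] x(3) by force
  then have "g x \<le> g s1"
    by (rule g_mono)
  moreover have "gjump g s1 \<le> g t - g s1"
    using gjump_le[OF mono s(4)] .
  ultimately show False
    using x(2) by simp
qed


lemma Hg_if_not_approached_from_below:
  assumes t: "t \<in> {a..b}" "g a < g t" "level_sup t \<in> Dg g"
    and not_approached: "\<not> approached_from_below t"
  shows "t \<in> Hg g"
proof -
  define L where "L = {s \<in> {a..b}. g s = g t}"
  define c where "c = Inf L"
  have L: "t \<in> L" "bdd_below L"
    using t(1) by (auto simp: L_def intro: bdd_belowI[of _ a])
  have "c \<le> t"
    unfolding c_def using L by (rule cInf_lower)
  have "a \<le> c"
    unfolding c_def using L(1) by (intro cInf_greatest) (auto simp: L_def)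
  have level: "g x = g t" if cx: "c < x" and x_le: "x \<le> level_sup t" for x
  proof -
    obtain y where "y \<in> L" "y < x"
      using cInf_less_iff[of L x] L cx unfolding c_def by blast
    then show ?thesis
      using g_mono[of y x] g_mono[of x "level_sup t"] g_level_sup[OF t(1)] x_le
      by (simp add: L_def)
  qed
  \<comment> \<open>otherwise c is the least point of the level set, and g t is approached from the left of c\<close>
  have "g c < g t"
  proof (rule ccontr)
    assume "\<not> g c < g t"
    with g_mono[OF \<open>c \<le> t\<close>] have "g c = g t"
      by simp
    with t(2) \<open>a \<le> c\<close> have "a < c"
      by (cases "a = c") auto
    moreover have "g s \<noteq> g t" if "s \<in> {a..b}" "s < c" for s
      using that cInf_lower[of s L] L(2) by (force simp: L_def c_def)
    ultimately have "approached_from_below t"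
      using \<open>c \<le> t\<close> t(1) \<open>g c = g t\<close> by (intro approached_from_below_if_least_in_level[of c]) auto
    with not_approached show False
      by blast
  qed
  then have "c < t"
    using \<open>c \<le> t\<close> by (cases "c = t") auto
  have "t \<le> level_sup t"
    using level_sup_bounds(2)[OF t(1)] .
  have "g t \<le> g y" if "c < y" for y
    using level[of "min y (level_sup t)"] g_mono[of "min y (level_sup t)" y] that \<open>c < t\<close>
      \<open>t \<le> level_sup t\<close> by simp
  then have "g t - g c \<le> gjump g c"
    by (rule gjump_ge[OF mono])
  with \<open>g c < g t\<close> have "c \<in> Dg g"
    by (simp add: Dg_def)
  moreover have "{c<..<level_sup t} \<subseteq> Cg g"
    using level by (intro greaterThanLessThan_subset_Cg) auto
  ultimately show ?thesis
    unfolding Hg_def using t(3) \<open>c < t\<close> \<open>t \<le> level_sup t\<close>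
    by (intro CollectI exI[of _ c] exI[of _ "level_sup t"]) simp
qed

lemma critical_set_iff:
  assumes t: "t \<in> {a..b}"
  shows "t \<in> ({tstar g a<..<b} \<inter> Ag g a b) - Hg g \<longleftrightarrow>
    level_sup t \<in> Dg g \<and> approached_from_below t"
proof
  assume "t \<in> ({tstar g a<..<b} \<inter> Ag g a b) - Hg g"
  then have "tstar g a < t" "level_sup t \<in> Dg g" "t \<notin> Hg g"
    by (auto simp: Ag_iff)
  then show "level_sup t \<in> Dg g \<and> approached_from_below t"
    using Hg_if_not_approached_from_below[OF t] tstar_a_less_iff[OF t] by blast
next
  assume crit: "level_sup t \<in> Dg g \<and> approached_from_below t"
  then obtain s where "s \<in> {a..b}" "g s < g t"
    unfolding approached_from_below_def using zero_less_one by blast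
  then have "g a < g t"
    using g_mono[of a s] by simp
  then have "tstar g a < t"
    using tstar_a_less_iff[OF t] by simp
  moreover have "t \<noteq> b"
    using crit b_ok le_level_sup[OF t, of b] level_sup_bounds[OF t] by force
  moreover have "t \<notin> Hg g"
    using crit Hg_not_approached_from_below by blast
  ultimately show "t \<in> ({tstar g a<..<b} \<inter> Ag g a b) - Hg g"
    using t crit by (auto simp: Ag_iff)
qed

section \<open>g-continuity of the correction term of the product rule\<close>

lemma norm_mult_tstar_jump_le:
  fixes p :: "'b::real_normed_field"
  shows "norm p \<le> M \<Longrightarrow> norm (p * of_real (tstar_jump s)) \<le> M * tstar_jump s"
  using tstar_jump_nonneg[of s] by (simp add: norm_mult mult_right_mono)

lemma mult_tstar_jump_small_below:
  fixes P :: "real \<Rightarrow> 'b::real_normed_field"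
  assumes P: "BCg g a b P" and "e > 0"
  shows "\<exists>d>0. \<forall>s\<in>{a..b}. g t - d < g s \<and> g s < g t \<longrightarrow> norm (P s * of_real (tstar_jump s)) < e"
proof -
  obtain M where "M > 0" and M: "\<And>s. s \<in> {a..b} \<Longrightarrow> norm (P s) \<le> M"
    using P unfolding BCg_def bounded_pos by auto
  have "norm (P s * of_real (tstar_jump s)) < e"
    if "s \<in> {a..b}" "g t - e / M < g s" "g s < g t" for s
  proof -
    have "norm (P s * of_real (tstar_jump s)) \<le> M * tstar_jump s"
      using M[OF that(1)] by (rule norm_mult_tstar_jump_le)
    also have "\<dots> \<le> M * (g t - g s)"
      using tstar_jump_le[OF that(1,3)] \<open>M > 0\<close> by simp
    also have "\<dots> < M * (e / M)"
      using that(2) \<open>M > 0\<close> by (intro mult_strict_left_mono) auto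
    finally show ?thesis
      using \<open>M > 0\<close> by simp
  qed
  with \<open>M > 0\<close> \<open>e > 0\<close> show ?thesis
    by (intro exI[of _ "e / M"]) auto
qed

lemma zero_if_g_continuous_mult_tstar_jump:
  fixes P :: "real \<Rightarrow> 'b::real_normed_field"
  assumes P: "BCg g a b P"
    and cont: "g_continuous_at g a b (\<lambda>s. P s * of_real (tstar_jump s)) (level_sup t)"
    and t: "t \<in> {a..b}" "level_sup t \<in> Dg g" "approached_from_below t"
  shows "P t = 0"
proof -
  define Q where "Q = (\<lambda>s. P s * (of_real (tstar_jump s) :: 'b))"
  define \<sigma> where "\<sigma> = level_sup t"
  have \<sigma>: "\<sigma> \<in> {a..b}" "g \<sigma> = g t"
    using level_sup_bounds(1)[OF t(1)] g_level_sup[OF t(1)] by (simp_all add: \<sigma>_def)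
  have "norm (Q \<sigma>) < e" if "e > 0" for e
  proof -
    obtain \<delta> where "\<delta> > 0" and \<delta>: "\<forall>s\<in>{a..b}. \<bar>g \<sigma> - g s\<bar> < \<delta> \<longrightarrow> norm (Q \<sigma> - Q s) < e / 2"
      using cont \<open>e > 0\<close> unfolding g_continuous_at_def Q_def \<sigma>_def by (meson half_gt_zero)
    obtain d where "d > 0" and d: "\<forall>s\<in>{a..b}. g t - d < g s \<and> g s < g t \<longrightarrow> norm (Q s) < e / 2"
      using mult_tstar_jump_small_below[OF P, of "e / 2" t] \<open>e > 0\<close> unfolding Q_def by auto
    obtain s where s: "s \<in> {a..b}" "g t - min \<delta> d < g s" "g s < g t"
      using t(3) \<open>\<delta> > 0\<close> \<open>d > 0\<close> unfolding approached_from_below_def by (meson min_less_iff_conj)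
    have "\<bar>g \<sigma> - g s\<bar> < \<delta>"
      using s \<sigma>(2) by (simp add: abs_less_iff)
    with \<delta> d s have "norm (Q \<sigma> - Q s) < e / 2" "norm (Q s) < e / 2"
      by auto
    then show ?thesis
      using norm_triangle_ineq[of "Q \<sigma> - Q s" "Q s"] by simp
  qed
  then have "Q \<sigma> = 0"
    by (metis less_irrefl norm_eq_zero zero_less_norm_iff)
  moreover have "P \<sigma> = P t"
    using P t(1) \<sigma> unfolding BCg_def by (blast intro: g_continuous_at_eq)
  moreover have "tstar_jump \<sigma> > 0"
    using t(2) Dg_disjoint_Cg[OF t(2)] tstar_not_Cg by (simp add: tstar_jump_def Dg_def \<sigma>_def)
  ultimately show ?thesis
    by (simp add: Q_def)
qed

lemma tstar_jump_small_right:
  assumes t: "t \<in> {a..b}" and "level_sup t \<notin> Dg g" and "\<eta> > 0"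
  shows "\<exists>d>0. \<forall>s\<in>{a..b}. g t < g s \<and> g s < g t + d \<longrightarrow> tstar_jump s < \<eta>"
proof (cases "level_sup t < b")
  case True
  define \<sigma> where "\<sigma> = level_sup t"
  have "gjump g \<sigma> = 0"
    using assms(2) mem_Dg_iff[OF mono] by (simp add: \<sigma>_def)
  then have "(g \<longlongrightarrow> g \<sigma>) (at_right \<sigma>)"
    using mono_tendsto_at_right_gjump[OF mono, of \<sigma>] by simp
  then have "\<forall>\<^sub>F r in at_right \<sigma>. g r < g \<sigma> + \<eta>"
    using \<open>\<eta> > 0\<close> by (intro order_tendstoD(2)) auto
  moreover have "\<forall>\<^sub>F r in at_right \<sigma>. r \<le> b"
    using True unfolding \<sigma>_def eventually_at_right_field by (intro exI[of _ b]) auto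
  ultimately have "\<forall>\<^sub>F r in at_right \<sigma>. g r < g \<sigma> + \<eta> \<and> r \<le> b"
    by eventually_elim simp
  then obtain c where "\<sigma> < c" and c: "\<And>r. \<sigma> < r \<Longrightarrow> r < c \<Longrightarrow> g r < g \<sigma> + \<eta> \<and> r \<le> b"
    unfolding eventually_at_right_field by blast
  define r where "r = (\<sigma> + c) / 2"
  have r: "\<sigma> < r" "r \<le> b" "g r < g \<sigma> + \<eta>"
    using c[of r] \<open>\<sigma> < c\<close> by (simp_all add: r_def)
  have "r \<in> {a..b}"
    using r level_sup_bounds(1)[OF t] by (simp add: \<sigma>_def)
  then have "g t < g r"
    using level_sup_less_iff[OF t] r(1) by (simp add: \<sigma>_def)
  moreover have "tstar_jump s < \<eta>" if "s \<in> {a..b}" "g t < g s" "g s < g r" for s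
    using tstar_jump_le[OF that(1,3)] that(2) r(3) g_level_sup[OF t] by (simp add: \<sigma>_def)
  ultimately show ?thesis
    by (intro exI[of _ "g r - g t"]) auto
next
  case False
  then have "g s \<le> g t" if "s \<in> {a..b}" for s
    using g_mono[of s "level_sup t"] level_sup_le[OF t] g_level_sup[OF t] that by simp
  then show ?thesis
    by (intro exI[of _ 1]) force
qed


lemma mult_tstar_jump_eq_zero:
  fixes P :: "real \<Rightarrow> 'b::real_normed_field"
  assumes P: "BCg g a b P" and t: "t \<in> {a..b}"
    and crit: "level_sup t \<in> Dg g \<Longrightarrow> approached_from_below t \<Longrightarrow> P t = 0"
    and s: "s \<in> {a..b}" "g s = g t"
    and zero: "approached_from_below t \<or> level_sup t \<notin> Dg g"
  shows "P s * of_real (tstar_jump s) = 0"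
proof (cases "level_sup t \<in> Dg g")
  case True
  with zero crit have "P t = 0"
    by blast
  moreover have "P s = P t"
    using P t s unfolding BCg_def by (blast intro: g_continuous_at_eq)
  ultimately show ?thesis
    by simp
next
  case False
  then have "tstar_jump s = 0"
    using tstar_jump_eq_zero[OF s(1)] level_sup_cong[OF s(2)] by simp
  then show ?thesis
    by simp
qed

lemma mult_tstar_jump_level_eq:
  fixes P :: "real \<Rightarrow> 'b::real_normed_field"
  assumes P: "BCg g a b P" and t: "t \<in> {a..b}"
    and crit: "level_sup t \<in> Dg g \<Longrightarrow> approached_from_below t \<Longrightarrow> P t = 0"
    and s: "s \<in> {a..b}" "g s = g t"
  shows "P s * of_real (tstar_jump s) = P t * of_real (tstar_jump t)"
proof (cases "approached_from_below t \<or> level_sup t \<notin> Dg g")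
  case True
  then show ?thesis
    using mult_tstar_jump_eq_zero[OF P t crit s True] mult_tstar_jump_eq_zero[OF P t crit t refl True]
    by (simp only:)
next
  case False
  then have "\<not> approached_from_below s"
    using approached_from_below_cong[OF s(2)] by simp
  then have "tstar_jump s = tstar_jump t"
    using tstar_jump_cases[OF s(1)] tstar_jump_cases[OF t] False level_sup_cong[OF s(2)] by auto
  moreover have "P s = P t"
    using P t s unfolding BCg_def by (blast intro: g_continuous_at_eq)
  ultimately show ?thesis
    by simp
qed

lemma mult_tstar_jump_below:
  fixes P :: "real \<Rightarrow> 'b::real_normed_field"
  assumes P: "BCg g a b P" and t: "t \<in> {a..b}"
    and crit: "level_sup t \<in> Dg g \<Longrightarrow> approached_from_below t \<Longrightarrow> P t = 0"
    and "e > 0"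
  shows "\<exists>d>0. \<forall>s\<in>{a..b}. g t - d < g s \<and> g s < g t \<longrightarrow>
    norm (P t * of_real (tstar_jump t) - P s * of_real (tstar_jump s)) < e"
proof (cases "approached_from_below t")
  case True
  then have Qt: "P t * of_real (tstar_jump t) = 0"
    using mult_tstar_jump_eq_zero[OF P t crit t] by simp
  show ?thesis
    using mult_tstar_jump_small_below[OF P \<open>e > 0\<close>, of t] unfolding Qt by simp
next
  case False
  then show ?thesis
    unfolding approached_from_below_def by blast
qed

lemma mult_tstar_jump_above:
  fixes P :: "real \<Rightarrow> 'b::real_normed_field"
  assumes P: "BCg g a b P" and t: "t \<in> {a..b}"
    and crit: "level_sup t \<in> Dg g \<Longrightarrow> approached_from_below t \<Longrightarrow> P t = 0"
    and "e > 0"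
  shows "\<exists>d>0. \<forall>s\<in>{a..b}. g t < g s \<and> g s < g t + d \<longrightarrow>
    norm (P t * of_real (tstar_jump t) - P s * of_real (tstar_jump s)) < e"
proof (cases "level_sup t \<in> Dg g")
  case True
  \<comment> \<open>the jump at the end of the level set of t leaves no values of g just above g t\<close>
  have "g t + gjump g (level_sup t) \<le> g s" if "s \<in> {a..b}" "g t < g s" for s
    using gjump_le[OF mono, of "level_sup t" s] level_sup_less_iff[OF t that(1)] that(2)
      g_level_sup[OF t] by simp
  moreover have "gjump g (level_sup t) > 0"
    using True by (simp add: Dg_def)
  ultimately show ?thesis
    by (intro exI[of _ "gjump g (level_sup t)"]) force
next
  case False
  then have Qt: "P t * of_real (tstar_jump t) = 0"
    using mult_tstar_jump_eq_zero[OF P t crit t] by simp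
  obtain M where "M > 0" and M: "\<And>s. s \<in> {a..b} \<Longrightarrow> norm (P s) \<le> M"
    using P unfolding BCg_def bounded_pos by auto
  have "e / M > 0"
    using \<open>e > 0\<close> \<open>M > 0\<close> by simp
  then obtain d where "d > 0" and d: "\<forall>s\<in>{a..b}. g t < g s \<and> g s < g t + d \<longrightarrow> tstar_jump s < e / M"
    using tstar_jump_small_right[OF t False] by blast
  have "norm (P s * of_real (tstar_jump s)) < e"
    if "s \<in> {a..b}" "g t < g s" "g s < g t + d" for s
  proof -
    have "norm (P s * of_real (tstar_jump s)) \<le> M * tstar_jump s"
      using M[OF that(1)] by (rule norm_mult_tstar_jump_le)
    also have "\<dots> < M * (e / M)"
      using d that \<open>M > 0\<close> by (intro mult_strict_left_mono) auto
    finally show ?thesis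
      using \<open>M > 0\<close> by simp
  qed
  with Qt \<open>d > 0\<close> show ?thesis
    by (intro exI[of _ d]) auto
qed

lemma g_continuous_mult_tstar_jump:
  fixes P :: "real \<Rightarrow> 'b::real_normed_field"
  assumes "BCg g a b P" "t \<in> {a..b}"
    and "level_sup t \<in> Dg g \<Longrightarrow> approached_from_below t \<Longrightarrow> P t = 0"
  shows "g_continuous_at g a b (\<lambda>s. P s * of_real (tstar_jump s)) t"
  using mult_tstar_jump_level_eq[OF assms] mult_tstar_jump_below[OF assms]
    mult_tstar_jump_above[OF assms]
  by (rule g_continuous_atI_one_sided)

lemma BCg_mult_tstar_jump_iff:
  fixes P :: "real \<Rightarrow> 'b::real_normed_field"
  assumes P: "BCg g a b P"
  shows "BCg g a b (\<lambda>s. P s * of_real (tstar_jump s)) \<longleftrightarrow>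
    (\<forall>t\<in>{a..b}. level_sup t \<in> Dg g \<and> approached_from_below t \<longrightarrow> P t = 0)"
proof -
  have "bounded ((\<lambda>s. of_real (tstar_jump s) :: 'b) ` {a..b})"
    unfolding bounded_iff using tstar_jump_le_range tstar_jump_nonneg
    by (intro exI[of _ "g b - g a"]) (auto simp: abs_of_nonneg)
  with P have "bounded ((\<lambda>s. P s * of_real (tstar_jump s)) ` {a..b})"
    unfolding BCg_def by (intro bounded_mult_comp) auto
  then show ?thesis
    unfolding BCg_def
    using zero_if_g_continuous_mult_tstar_jump[OF P] g_continuous_mult_tstar_jump[OF P]
      level_sup_bounds(1)
    by blast
qed

lemma has_gderiv_mult_BC1g:
  fixes f1 f2 :: "real \<Rightarrow> 'b::real_normed_field"
  assumes f1: "BC1g g a b f1" and f2: "BC1g g a b f2" and t: "t \<in> {a..b}"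
  shows "has_gderiv g a b (\<lambda>s. f1 s * f2 s) t
    (gderiv g a b f1 t * f2 t + f1 t * gderiv g a b f2 t +
     gderiv g a b f1 t * gderiv g a b f2 t * of_real (tstar_jump t))"
proof -
  have "tstar g t \<in> {a..b}" "g (tstar g t) = g t"
    using tstar_bounds[OF t] t by auto
  then have f_tstar: "f1 (tstar g t) = f1 t" "f2 (tstar g t) = f2 t"
    using f1 f2 t unfolding BC1g_def BCg_def by (blast intro: g_continuous_at_eq)+
  have "has_gderiv g a b f1 t (gderiv g a b f1 t)" "has_gderiv g a b f2 t (gderiv g a b f2 t)"
    using f1 f2 t unfolding BC1g_def by (blast intro: has_gderiv_gderiv)+
  from has_gderiv_mult[OF t this] show ?thesis
    unfolding f_tstar tstar_jump_def .
qed

lemma BC1g_mult_iff_BCg: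
  fixes f1 f2 :: "real \<Rightarrow> 'b::real_normed_field"
  assumes f1: "BC1g g a b f1" and f2: "BC1g g a b f2"
  shows "BC1g g a b (\<lambda>t. f1 t * f2 t) \<longleftrightarrow>
    BCg g a b (\<lambda>t. gderiv g a b f1 t * gderiv g a b f2 t * of_real (tstar_jump t))"
    (is "_ \<longleftrightarrow> BCg g a b ?Q")
proof -
  define F where "F t = gderiv g a b f1 t * f2 t + f1 t * gderiv g a b f2 t" for t
  have F: "BCg g a b F"
    using f1 f2 unfolding F_def BC1g_def by (intro BCg_add BCg_mult) auto
  have deriv: "has_gderiv g a b (\<lambda>s. f1 s * f2 s) t (F t + ?Q t)" if "t \<in> {a..b}" for t
    using has_gderiv_mult_BC1g[OF f1 f2 that] by (simp add: F_def)
  have "BCg g a b (\<lambda>t. f1 t * f2 t)"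
    using f1 f2 unfolding BC1g_def by (blast intro: BCg_mult)
  moreover have "\<forall>t\<in>{a..b}. g_differentiable g a b (\<lambda>s. f1 s * f2 s) t"
    using deriv unfolding g_differentiable_def by blast
  moreover have "BCg g a b (gderiv g a b (\<lambda>s. f1 s * f2 s)) \<longleftrightarrow> BCg g a b (\<lambda>t. F t + ?Q t)"
    using deriv by (intro BCg_cong gderiv_eqI)
  ultimately have "BC1g g a b (\<lambda>t. f1 t * f2 t) \<longleftrightarrow> BCg g a b (\<lambda>t. F t + ?Q t)"
    unfolding BC1g_def by blast
  also have "\<dots> \<longleftrightarrow> BCg g a b ?Q"
    using BCg_add[OF F, of ?Q] BCg_diff[OF _ F, of "\<lambda>t. F t + ?Q t"] by auto
  finally show ?thesis .
qed

lemma BC1g_mult_iff: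
  fixes f1 f2 :: "real \<Rightarrow> 'b::real_normed_field"
  assumes f1: "BC1g g a b f1" and f2: "BC1g g a b f2"
  shows "BC1g g a b (\<lambda>t. f1 t * f2 t) \<longleftrightarrow>
    (\<forall>t\<in>({tstar g a<..<b} \<inter> Ag g a b) - Hg g. gderiv g a b f1 t * gderiv g a b f2 t = 0)"
proof -
  have "{tstar g a<..<b} \<subseteq> {a..b}"
    using tstar_bounds(1)[of a] ab by auto
  then have "(\<forall>t\<in>({tstar g a<..<b} \<inter> Ag g a b) - Hg g. gderiv g a b f1 t * gderiv g a b f2 t = 0)
    \<longleftrightarrow> (\<forall>t\<in>{a..b}. level_sup t \<in> Dg g \<and> approached_from_below t \<longrightarrow>
        gderiv g a b f1 t * gderiv g a b f2 t = 0)"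
    using critical_set_iff by blast
  moreover have "BCg g a b (\<lambda>t. gderiv g a b f1 t * gderiv g a b f2 t)"
    using f1 f2 unfolding BC1g_def by (blast intro: BCg_mult)
  from BCg_mult_tstar_jump_iff[OF this] have "BCg g a b (\<lambda>t. gderiv g a b f1 t * gderiv g a b f2 t * of_real (tstar_jump t))
    \<longleftrightarrow> (\<forall>t\<in>{a..b}. level_sup t \<in> Dg g \<and> approached_from_below t \<longrightarrow>
        gderiv g a b f1 t * gderiv g a b f2 t = 0)"
    by simp
  ultimately show ?thesis
    using BC1g_mult_iff_BCg[OF f1 f2] by simp
qed

end

theorem theorem5p7:
  fixes g :: "real \<Rightarrow> real" and a b :: real
  assumes mono: "mono g"
    and leftcont: "\<And>t. (g \<longlongrightarrow> g t) (at_left t)"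
    and ab: "a < b"
    and a_ok: "a \<notin> Ng_minus g \<union> Dg g"
    and b_ok: "b \<notin> Cg g \<union> Ng_plus g \<union> Dg g"
  shows "(\<forall>f1 f2 :: real \<Rightarrow> real. BC1g g a b f1 \<and> BC1g g a b f2 \<longrightarrow>
            (BC1g g a b (\<lambda>t. f1 t * f2 t) \<longleftrightarrow>
             (\<forall>t \<in> ({tstar g a<..<b} \<inter> Ag g a b) - Hg g.
                gderiv g a b f1 t * gderiv g a b f2 t = 0)))
       \<and> (\<forall>f1 f2 :: real \<Rightarrow> complex. BC1g g a b f1 \<and> BC1g g a b f2 \<longrightarrow>
            (BC1g g a b (\<lambda>t. f1 t * f2 t) \<longleftrightarrow>
             (\<forall>t \<in> ({tstar g a<..<b} \<inter> Ag g a b) - Hg g.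
                gderiv g a b f1 t * gderiv g a b f2 t = 0)))"
proof -
  interpret g_interval g a b
    using assms by unfold_locales
  show ?thesis
    by (intro conjI allI impI; elim conjE; rule BC1g_mult_iff)
qed

end
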